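(* Let $2\le 2k<n$ and let $v=v(t)>0$ be a smooth function on $\mathbb R$, viewed as a function on $\mathbb R\times\mathbb S^{n-1}$, and set $g_v=v^{4k/(n-2k)}g_{cyl}$ and $h(t)=v(t)^2-\big(\frac{2k}{n-2k}\big)^2\dot v(t)^2$. Assume $h_0:=h(0)>0$. Then $v$ solves $\sigma_k(B_{g_v})=0$ on $\mathbb R\times\mathbb S^{n-1}$ if and only if $v(t)=\sqrt{h_0}\cosh\big(\frac{n-2k}{2k}t-c\big)$ for some $c\in\mathbb R$.
   Context: $g_{cyl}=dt^2+d\theta^2$ is the product metric on $\mathbb R\times\mathbb S^{n-1}$ with $d\theta^2$ the round metric. For a metric $g$, $A_g=\frac1{n-2}(\mathrm{Ric}_g-\frac{R_g}{2(n-1)}g)$ is its Schouten tensor, and $B_{g_v}=\frac{n-2k}{2k}v^{2n/(n-2k)}g_v^{-1}A_{g_v}$ (a symmetric endomorphism); $\sigma_k$ denotes the $k$-th elementary symmetric function of its eigenvalues. *)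

theory Defs
  imports "HOL-Analysis.Analysis"
begin

text \<open>Local-coordinate Riemannian geometry on an open subset of R^n, indices of finite type 'n.
  A metric is a field of symmetric matrices G :: real^'n \<Rightarrow> real^'n^'n, with entries G x $ i $ j.\<close>

definition pd :: "'n::finite \<Rightarrow> (real^'n \<Rightarrow> real) \<Rightarrow> real^'n \<Rightarrow> real" where
  "pd l f x = deriv (\<lambda>s. f (x + s *\<^sub>R axis l 1)) 0"

definition christoffel :: "(real^'n \<Rightarrow> real^'n^'n) \<Rightarrow> 'n::finite \<Rightarrow> 'n \<Rightarrow> 'n \<Rightarrow> real^'n \<Rightarrow> real" where
  "christoffel G m i j x = (1/2) * (\<Sum>l\<in>UNIV. matrix_inv (G x) $ m $ l *
      (pd i (\<lambda>y. G y $ j $ l) x + pd j (\<lambda>y. G y $ i $ l) x - pd l (\<lambda>y. G y $ i $ j) x))"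

definition ricci :: "(real^'n \<Rightarrow> real^'n^'n) \<Rightarrow> 'n::finite \<Rightarrow> 'n \<Rightarrow> real^'n \<Rightarrow> real" where
  "ricci G i j x =
     (\<Sum>m\<in>UNIV. pd m (\<lambda>y. christoffel G m i j y) x - pd j (\<lambda>y. christoffel G m m i y) x)
   + (\<Sum>m\<in>UNIV. \<Sum>l\<in>UNIV. christoffel G m m l x * christoffel G l i j x
                          - christoffel G m j l x * christoffel G l m i x)"

definition scalar_curv :: "(real^'n \<Rightarrow> real^'n^'n) \<Rightarrow> real^'n::finite \<Rightarrow> real" where
  "scalar_curv G x = (\<Sum>i\<in>UNIV. \<Sum>j\<in>UNIV. matrix_inv (G x) $ i $ j * ricci G i j x)"

definition schouten :: "(real^'n \<Rightarrow> real^'n^'n) \<Rightarrow> real^'n::finite \<Rightarrow> real^'n^'n" where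
  "schouten G x = (\<chi> i j. (ricci G i j x
       - scalar_curv G x / (2 * (real CARD('n) - 1)) * G x $ i $ j) / (real CARD('n) - 2))"

text \<open>Eigenvalues (with multiplicity) of an endomorphism whose characteristic polynomial splits over R,
  and the k-th elementary symmetric function of them.\<close>
definition eigs :: "real^'n^'n \<Rightarrow> 'n::finite \<Rightarrow> real" where
  "eigs B = (SOME lam. \<forall>\<mu>. det (\<mu> *\<^sub>R mat 1 - B) = (\<Prod>i\<in>UNIV. \<mu> - lam i))"

definition sigma_k :: "nat \<Rightarrow> real^'n^'n \<Rightarrow> real" where
  "sigma_k k B = (\<Sum>S\<in>{S::'n::finite set. card S = k}. \<Prod>i\<in>S. eigs B i)"

text \<open>Cylinder metric dt^2 + d theta^2 on R x S^(n-1) in the chart (t,y): t = x $ i0, y = the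
  remaining n-1 coordinates, stereographic coordinates on the sphere (round metric 4|dy|^2/(1+|y|^2)^2).\<close>
definition cyl_metric :: "'n::finite \<Rightarrow> real^'n \<Rightarrow> real^'n^'n" where
  "cyl_metric i0 x = (\<chi> i j. if i = j then
       (if i = i0 then 1 else 4 / (1 + (\<Sum>l\<in>UNIV - {i0}. (x $ l)^2))^2) else 0)"

definition conf_metric :: "nat \<Rightarrow> 'n::finite \<Rightarrow> (real \<Rightarrow> real) \<Rightarrow> real^'n \<Rightarrow> real^'n^'n" where
  "conf_metric k i0 v x =
     (v (x $ i0) powr (4 * real k / (real CARD('n) - 2 * real k))) *\<^sub>R cyl_metric i0 x"

definition B_endo :: "nat \<Rightarrow> 'n::finite \<Rightarrow> (real \<Rightarrow> real) \<Rightarrow> real^'n \<Rightarrow> real^'n^'n" where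
  "B_endo k i0 v x =
     (((real CARD('n) - 2 * real k) / (2 * real k)) *
        v (x $ i0) powr (2 * real CARD('n) / (real CARD('n) - 2 * real k)))
     *\<^sub>R (matrix_inv (conf_metric k i0 v x) ** schouten (conf_metric k i0 v) x)"

definition smooth_real :: "(real \<Rightarrow> real) \<Rightarrow> bool" where
  "smooth_real v \<longleftrightarrow> (\<forall>m x. ((deriv ^^ m) v) differentiable (at x))"

end

theory Submission
  imports Defs
begin

text \<open>
  For \<open>v = v(t)\<close> the metric \<open>g\<^sub>v\<close> is a conformal rescaling \<open>P(t) g\<^sub>c\<^sub>y\<^sub>l\<close> that only depends on
  the line coordinate, so its Schouten tensor is diagonal in the product splitting and \<open>B\<^sub>g\<^sub>v\<close> has
  one eigenvalue \<open>\<lambda>\<^sub>1\<close> in the \<open>t\<close>-direction and the eigenvalue \<open>\<lambda>\<^sub>2 = b h / 2\<close> with multiplicity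
  \<open>n - 1\<close> along the sphere, where \<open>b = (n-2k)/(2k)\<close>. Hence
  \<open>\<sigma>\<^sub>k(B\<^sub>g\<^sub>v) = C(n-1,k-1) \<lambda>\<^sub>2\<^sup>k\<^sup>-\<^sup>1 ((n-k)/k \<lambda>\<^sub>2 + \<lambda>\<^sub>1)\<close>, which works out to a nonzero multiple of
  \<open>h\<^sup>k\<^sup>-\<^sup>1 v (v - b\<^sup>-\<^sup>2 v'')\<close>. Since \<open>h' = 2 v' (v - b\<^sup>-\<^sup>2 v'')\<close>, the equation makes \<open>h\<^sup>k\<close> constant,
  so \<open>h\<close> never vanishes and the equation is equivalent to \<open>v'' = b\<^sup>2 v\<close>; with \<open>v > 0\<close> and
  \<open>h(0) > 0\<close> its solutions are exactly \<open>\<surd>h(0) cosh (b t - c)\<close>.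
\<close>

section \<open>Partial derivatives in coordinates\<close>

lemma ray_component: "(x + s *\<^sub>R axis l 1) $ j = x $ j + (if j = l then s else (0::real))"
  by (simp add: axis_def)

lemma pd_eqI: "((\<lambda>s. f (x + s *\<^sub>R axis l 1)) has_real_derivative D) (at 0) \<Longrightarrow> pd l f x = D"
  unfolding pd_def by (rule DERIV_imp_deriv)

lemma pd_const: "pd l (\<lambda>y. c) x = 0"
  by (rule pd_eqI) simp

lemma pd_if: "pd l (\<lambda>y. if b then f y else g y) x = (if b then pd l f x else pd l g x)"
  by (cases b) simp_all

lemma DERIV_ray_component:
  "((\<lambda>s. (x + s *\<^sub>R axis l 1) $ j) has_real_derivative (if j = l then 1 else 0)) (at s0)"
  by (cases "j = l") (auto simp: ray_component axis_def intro!: derivative_eq_intros)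

lemma DERIV_ray_fun_component:
  assumes "g differentiable (at (x $ j))"
  shows "((\<lambda>s. g ((x + s *\<^sub>R axis l 1) $ j)) has_real_derivative
     (if j = l then deriv g (x $ j) else 0)) (at 0)"
proof -
  have "(g has_real_derivative deriv g ((x + 0 *\<^sub>R axis l 1) $ j)) (at ((x + 0 *\<^sub>R axis l 1) $ j))"
    using assms by (simp add: DERIV_deriv_iff_real_differentiable)
  from DERIV_chain2[OF this DERIV_ray_component[of x l j 0]] show ?thesis
    by (cases "j = l") (simp_all add: axis_def)
qed

lemma pd_fun_component:
  "g differentiable (at (x $ j)) \<Longrightarrow> pd l (\<lambda>y. g (y $ j)) x = (if j = l then deriv g (x $ j) else 0)"
  by (rule pd_eqI, rule DERIV_ray_fun_component)

lemma matrix_inv_eqI: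
  fixes A B :: "real^'n^'n"
  assumes "A ** B = mat 1" "B ** A = mat 1"
  shows "matrix_inv A = B"
proof -
  have "\<exists>A'. A ** A' = mat 1 \<and> A' ** A = mat 1" using assms by blast
  then have C: "A ** matrix_inv A = mat 1 \<and> matrix_inv A ** A = mat 1"
    unfolding matrix_inv_def by (rule someI_ex)
  have "matrix_inv A = matrix_inv A ** (A ** B)" using assms by simp
  also have "\<dots> = B" using C by (simp add: matrix_mul_assoc)
  finally show ?thesis .
qed

lemma mult_if_zero:
  "(if P then a else (0::real)) * b = (if P then a * b else 0)"
  "b * (if P then a else (0::real)) = (if P then b * a else 0)"
  by auto

lemma minus_if_zero: "- (if P then a else (0::real)) = (if P then - a else 0)"
  by auto

lemma sum_if_zero: "(\<Sum>l\<in>A. if P then f l else 0) = (if P then (\<Sum>l\<in>A. f l) else (0::real))"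
  by auto

lemma matrix_inv_diagonal:
  fixes d :: "'n::finite \<Rightarrow> real"
  assumes "\<And>i. d i \<noteq> 0"
  shows "matrix_inv (\<chi> i j. if i = j then d i else 0) = (\<chi> i j. if i = j then 1 / d i else 0)"
  by (rule matrix_inv_eqI) (use assms in \<open>auto simp: matrix_matrix_mult_def mat_def vec_eq_iff mult_if_zero\<close>)

section \<open>Curvature of a conformal cylinder metric \<open>P(t) g\<^sub>c\<^sub>y\<^sub>l\<close>\<close>

locale conformal_cylinder =
  fixes i0 :: "'n::finite" and P :: "real \<Rightarrow> real"
  assumes P_pos: "\<And>t. P t > 0"
    and P_differentiable: "\<And>t. P differentiable (at t)"
    and deriv_P_differentiable: "\<And>t. deriv P differentiable (at t)"
begin

definition rad2 :: "real^'n \<Rightarrow> real" where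
  "rad2 x = (\<Sum>l\<in>UNIV - {i0}. (x $ l)^2)"

definition sph :: "real^'n \<Rightarrow> real" where
  "sph x = 4 / (1 + rad2 x)^2"

text \<open>\<open>phi l = \<partial>\<^sub>l log \<surd>sph\<close> (see \<open>DERIV_ray_sph\<close>).\<close>
definition phi :: "'n \<Rightarrow> real^'n \<Rightarrow> real" where
  "phi i x = - 2 * x $ i / (1 + rad2 x)"

definition dphi :: "'n \<Rightarrow> 'n \<Rightarrow> real^'n \<Rightarrow> real" where
  "dphi l i x = (if l = i0 then 0 else (if i = l then - 2 / (1 + rad2 x) else 0) + phi i x * phi l x)"

definition alpha :: "real \<Rightarrow> real" where
  "alpha t = deriv P t / (2 * P t)"

definition dalpha :: "real \<Rightarrow> real" where
  "dalpha t = deriv alpha t"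

definition metric_diag :: "'n \<Rightarrow> real^'n \<Rightarrow> real" where
  "metric_diag j x = (if j = i0 then P (x $ i0) else P (x $ i0) * sph x)"

definition dmetric_diag :: "'n \<Rightarrow> 'n \<Rightarrow> real^'n \<Rightarrow> real" where
  "dmetric_diag l j x = (if j = i0 then (if l = i0 then deriv P (x $ i0) else 0)
     else (if l = i0 then deriv P (x $ i0) * sph x else P (x $ i0) * (2 * sph x * phi l x)))"

definition metric :: "real^'n \<Rightarrow> real^'n^'n" where
  "metric x = (\<chi> i j. if i = j then metric_diag i x else 0)"

definition Gamma :: "'n \<Rightarrow> 'n \<Rightarrow> 'n \<Rightarrow> real^'n \<Rightarrow> real" where
  "Gamma m i j x = (if m = i0 then (if i = i0 \<and> j = i0 then alpha (x $ i0)
        else if i \<noteq> i0 \<and> i = j then - (sph x * alpha (x $ i0)) else 0)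
     else if i = i0 then (if j = m then alpha (x $ i0) else 0)
     else if j = i0 then (if i = m then alpha (x $ i0) else 0)
     else (if j = m then phi i x else 0) + (if i = m then phi j x else 0) - (if i = j then phi m x else 0))"

definition dGamma :: "'n \<Rightarrow> 'n \<Rightarrow> 'n \<Rightarrow> 'n \<Rightarrow> real^'n \<Rightarrow> real" where
  "dGamma l m i j x = (if m = i0 then (if i = i0 \<and> j = i0 then (if l = i0 then dalpha (x $ i0) else 0)
        else if i \<noteq> i0 \<and> i = j then
          - (if l = i0 then sph x * dalpha (x $ i0) else 2 * sph x * phi l x * alpha (x $ i0))
        else 0)
     else if i = i0 then (if j = m then (if l = i0 then dalpha (x $ i0) else 0) else 0)
     else if j = i0 then (if i = m then (if l = i0 then dalpha (x $ i0) else 0) else 0)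
     else (if j = m then dphi l i x else 0) + (if i = m then dphi l j x else 0)
       - (if i = j then dphi l m x else 0))"

lemma rad2_nonneg: "rad2 x \<ge> 0"
  unfolding rad2_def by (simp add: sum_nonneg)

lemma sph_pos: "sph x > 0"
  unfolding sph_def using rad2_nonneg[of x] by simp

lemma metric_diag_pos: "metric_diag j x > 0"
  unfolding metric_diag_def using sph_pos P_pos by simp

lemma alpha_differentiable: "alpha differentiable (at t)"
  unfolding alpha_def[abs_def] using P_differentiable deriv_P_differentiable P_pos[of t]
  by (intro derivative_intros) auto

lemma DERIV_ray_rad2:
  "((\<lambda>s. rad2 (x + s *\<^sub>R axis l 1)) has_real_derivative (if l = i0 then 0 else 2 * x $ l)) (at 0)"
proof -
  have "((\<lambda>s. \<Sum>j\<in>UNIV - {i0}. ((x + s *\<^sub>R axis l 1) $ j)^2) has_real_derivative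
     (\<Sum>j\<in>UNIV - {i0}. of_nat 2 * ((if j = l then 1 else 0) * ((x + 0 *\<^sub>R axis l 1) $ j) ^ (2 - Suc 0)))) (at 0)"
    by (intro DERIV_sum DERIV_power DERIV_ray_component)
  moreover have "(\<Sum>j\<in>UNIV - {i0}. of_nat 2 * ((if j = l then 1 else 0) * ((x + 0 *\<^sub>R axis l 1) $ j) ^ (2 - Suc 0)))
     = (if l = i0 then 0 else 2 * x $ l)"
    by (simp add: mult_if_zero)
  ultimately show ?thesis unfolding rad2_def by simp
qed

lemma DERIV_ray_sph:
  "((\<lambda>s. sph (x + s *\<^sub>R axis l 1)) has_real_derivative (if l = i0 then 0 else 2 * sph x * phi l x)) (at 0)"
proof -
  define u where "u = 1 + rad2 x"
  have u_pos: "u > 0" using rad2_nonneg[of x] by (simp add: u_def)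
  define D where "D = (if l = i0 then 0 else 2 * x $ l)"
  have "((\<lambda>s. (1 + rad2 (x + s *\<^sub>R axis l 1))^2) has_real_derivative 2 * D * u) (at 0)"
    by (rule DERIV_cong[OF DERIV_power[OF DERIV_add[OF DERIV_const DERIV_ray_rad2]]]) (simp add: D_def u_def)
  from DERIV_divide[OF DERIV_const this, of 4]
  have "((\<lambda>s. sph (x + s *\<^sub>R axis l 1)) has_real_derivative (0 * u^2 - 4 * (2 * D * u)) / (u^2 * u^2)) (at 0)"
    using u_pos by (simp add: u_def sph_def)
  moreover have "(0 * u^2 - 4 * (2 * D * u)) / (u^2 * u^2) = (if l = i0 then 0 else 2 * sph x * phi l x)"
    using u_pos by (cases "l = i0")
      (simp_all add: D_def sph_def phi_def u_def[symmetric] field_simps power2_eq_square power3_eq_cube)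
  ultimately show ?thesis by simp
qed

lemma DERIV_ray_phi:
  assumes "i \<noteq> i0"
  shows "((\<lambda>s. phi i (x + s *\<^sub>R axis l 1)) has_real_derivative dphi l i x) (at 0)"
proof -
  have pos: "1 + rad2 x > 0" using rad2_nonneg[of x] by simp
  note d = DERIV_divide[OF DERIV_cmult[OF DERIV_ray_component] DERIV_add[OF DERIV_const DERIV_ray_rad2]]
  have "((\<lambda>s. - 2 * (x + s *\<^sub>R axis l 1) $ i / (1 + rad2 (x + s *\<^sub>R axis l 1))) has_real_derivative dphi l i x) (at 0)"
    by (rule DERIV_cong[OF d]) (use pos assms in \<open>auto simp: dphi_def phi_def divide_simps\<close>)
  then show ?thesis unfolding phi_def by simp
qed

lemma DERIV_ray_phi_if:
  "i \<noteq> i0 \<Longrightarrow> ((\<lambda>s. if b then phi i (x + s *\<^sub>R axis l 1) else 0)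
     has_real_derivative (if b then dphi l i x else 0)) (at 0)"
  by (cases b) (simp_all add: DERIV_ray_phi)

lemma DERIV_ray_sph_alpha:
  "((\<lambda>s. sph (x + s *\<^sub>R axis l 1) * alpha ((x + s *\<^sub>R axis l 1) $ i0)) has_real_derivative
     (if l = i0 then sph x * dalpha (x $ i0) else 2 * sph x * phi l x * alpha (x $ i0))) (at 0)"
  by (rule DERIV_cong[OF DERIV_mult[OF DERIV_ray_sph DERIV_ray_fun_component[OF alpha_differentiable]]])
    (auto simp: dalpha_def)

lemma pd_metric_diag: "pd l (metric_diag j) x = dmetric_diag l j x"
proof (cases "j = i0")
  case True
  then have "metric_diag j = (\<lambda>y. P (y $ i0))" by (auto simp: metric_diag_def)
  then show ?thesis
    using pd_fun_component[where g=P and j=i0 and l=l and x=x, OF P_differentiable] True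
    by (auto simp: dmetric_diag_def)
next
  case False
  then have "metric_diag j = (\<lambda>y. P (y $ i0) * sph y)" by (auto simp: metric_diag_def)
  moreover have "((\<lambda>s. P ((x + s *\<^sub>R axis l 1) $ i0) * sph (x + s *\<^sub>R axis l 1)) has_real_derivative
     dmetric_diag l j x) (at 0)"
    by (rule DERIV_cong[OF DERIV_mult[OF DERIV_ray_fun_component[OF P_differentiable] DERIV_ray_sph]])
      (use False in \<open>auto simp: dmetric_diag_def\<close>)
  ultimately show ?thesis by (simp add: pd_eqI)
qed

lemma pd_metric: "pd l (\<lambda>y. metric y $ i $ j) x = (if i = j then dmetric_diag l i x else 0)"
  by (cases "i = j") (simp_all add: metric_def pd_metric_diag pd_const)

lemma matrix_inv_metric: "matrix_inv (metric x) = (\<chi> i j. if i = j then 1 / metric_diag i x else 0)"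
  unfolding metric_def by (rule matrix_inv_diagonal) (simp add: metric_diag_pos less_imp_neq[symmetric])

lemma christoffel_metric: "christoffel metric m i j x = Gamma m i j x"
proof -
  have "christoffel metric m i j x = (1/2) * (1 / metric_diag m x) *
     ((if j = m then dmetric_diag i m x else 0) + (if i = m then dmetric_diag j m x else 0)
      - (if i = j then dmetric_diag m i x else 0))"
    unfolding christoffel_def matrix_inv_metric pd_metric by (simp add: mult_if_zero)
  also have "\<dots> = Gamma m i j x"
    unfolding Gamma_def dmetric_diag_def alpha_def
    using metric_diag_pos[of m x] P_pos[of "x $ i0"] sph_pos[of x]
    by (auto simp: metric_diag_def field_simps)
  finally show ?thesis .
qed

lemma pd_Gamma: "pd l (\<lambda>y. Gamma m i j y) x = dGamma l m i j x"
proof -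
  have pd_alpha: "pd l (\<lambda>y. alpha (y $ i0)) x = (if l = i0 then dalpha (x $ i0) else 0)"
    using pd_fun_component[where g=alpha and j=i0 and l=l and x=x, OF alpha_differentiable]
    by (auto simp: dalpha_def)
  have pd_sph_alpha: "pd l (\<lambda>y. - (sph y * alpha (y $ i0))) x
     = - (if l = i0 then sph x * dalpha (x $ i0) else 2 * sph x * phi l x * alpha (x $ i0))"
    by (rule pd_eqI) (rule DERIV_minus[OF DERIV_ray_sph_alpha])
  have pd_phis: "pd l (\<lambda>y. (if j = m then phi i y else 0) + (if i = m then phi j y else 0)
        - (if i = j then phi m y else 0)) x
     = (if j = m then dphi l i x else 0) + (if i = m then dphi l j x else 0) - (if i = j then dphi l m x else 0)"
    if "i \<noteq> i0" "j \<noteq> i0" "m \<noteq> i0"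
    by (rule pd_eqI, rule DERIV_diff[OF DERIV_add[OF DERIV_ray_phi_if DERIV_ray_phi_if] DERIV_ray_phi_if])
      (use that in auto)
  show ?thesis
    unfolding Gamma_def dGamma_def
    by (cases "m = i0"; cases "i = i0"; cases "j = i0") (simp_all add: pd_if pd_alpha pd_const pd_sph_alpha pd_phis)
qed

lemma sum_UNIV_remove: "(\<Sum>m\<in>UNIV. f m) = f i0 + (\<Sum>m\<in>UNIV - {i0}. f m)"
  by (simp add: sum.remove)

lemma card_sphere_coords: "real (card (UNIV - {i0})) = real CARD('n) - 1"
  by (simp add: card_Diff_singleton of_nat_diff card_ge_0_finite Suc_le_eq)

lemma sum_phi_sq: "(\<Sum>l\<in>UNIV - {i0}. phi l x * phi l x) = 4 * rad2 x / (1 + rad2 x)^2"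
proof -
  have pos: "1 + rad2 x > 0" using rad2_nonneg[of x] by simp
  have "phi l x * phi l x = (4 / (1 + rad2 x)^2) * (x $ l)^2" for l
    using pos by (simp add: phi_def power2_eq_square field_simps)
  then have "(\<Sum>l\<in>UNIV - {i0}. phi l x * phi l x) = (4 / (1 + rad2 x)^2) * rad2 x"
    by (simp add: rad2_def sum_distrib_left)
  then show ?thesis by simp
qed

lemma ricci_metric_eq: "ricci metric i j x = (\<Sum>m\<in>UNIV. dGamma m m i j x - dGamma j m m i x)
   + (\<Sum>m\<in>UNIV. \<Sum>l\<in>UNIV. Gamma m m l x * Gamma l i j x - Gamma m j l x * Gamma l m i x)"
  unfolding ricci_def christoffel_metric pd_Gamma ..

lemmas sum_if_simps = ring_distribs sum.distrib sum_subtractf sum_negf sum_if_zero sum.delta sum.delta'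
  mult_if_zero minus_if_zero

lemma ricci_metric_tt: "ricci metric i0 i0 x = - (real CARD('n) - 1) * dalpha (x $ i0)"
  unfolding ricci_metric_eq
  by (simp add: sum_UNIV_remove)
    (simp add: dGamma_def Gamma_def mult_if_zero minus_if_zero algebra_simps sum.distrib cong: if_cong)

lemma ricci_metric_ty: "j \<noteq> i0 \<Longrightarrow> ricci metric i0 j x = 0"
  unfolding ricci_metric_eq
  by (simp add: sum_UNIV_remove) (simp add: dGamma_def Gamma_def sum_if_simps cong: if_cong)

lemma ricci_metric_yt: "i \<noteq> i0 \<Longrightarrow> ricci metric i i0 x = 0"
  unfolding ricci_metric_eq
  by (simp add: sum_UNIV_remove) (simp add: dGamma_def Gamma_def sum_if_simps cong: if_cong, simp add: dphi_def)

lemma ricci_metric_yz: "i \<noteq> i0 \<Longrightarrow> j \<noteq> i0 \<Longrightarrow> i \<noteq> j \<Longrightarrow> ricci metric i j x = 0"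
  unfolding ricci_metric_eq
  by (simp add: sum_UNIV_remove) (simp add: dGamma_def Gamma_def sum_if_simps cong: if_cong, simp add: dphi_def)

lemma ricci_metric_yy:
  assumes "i \<noteq> i0"
  shows "ricci metric i i x = sph x * ((real CARD('n) - 2) * (1 - alpha (x $ i0)^2) - dalpha (x $ i0))"
proof -
  have normalize: "8*(u-1)/u^2 + (2*((4/u^2)*(a*a)) + (c*(p*p) + ((c*2-2)/u + (-(c*(a*((4/u^2)*a)))
      - c*(4*(u-1))/u^2 - c*(p*p - 2/u))))) - 6/u
    = (4/u^2)*c + ((4/u^2)*(2*a^2) - (4/u^2)*(c*a^2) - (4/u^2)*2)" if "u > 0" for u a c p :: real
    using that by (simp add: field_simps power2_eq_square)
  show ?thesis
    using assms unfolding ricci_metric_eq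
    apply (simp add: sum_UNIV_remove)
    apply (simp add: dGamma_def Gamma_def sum_if_simps cong: if_cong)
    apply (simp add: dphi_def sum_subtractf sum_phi_sq card_sphere_coords)
    using normalize[of "1 + rad2 x" "alpha (x $ i0)" "real CARD('n)" "phi i x"] rad2_nonneg[of x]
    by (simp add: sph_def)
qed

lemma ricci_metric:
  "ricci metric i j x = (if i = j then (if i = i0 then - (real CARD('n) - 1) * dalpha (x $ i0)
     else sph x * ((real CARD('n) - 2) * (1 - alpha (x $ i0)^2) - dalpha (x $ i0))) else 0)"
  using ricci_metric_tt ricci_metric_ty ricci_metric_yt ricci_metric_yy ricci_metric_yz
  by (cases "i = i0"; cases "j = i0") auto

lemma scalar_curv_metric: "scalar_curv metric x
   = (real CARD('n) - 1) * ((real CARD('n) - 2) * (1 - alpha (x $ i0)^2) - 2 * dalpha (x $ i0)) / P (x $ i0)"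
proof -
  have "scalar_curv metric x = (\<Sum>i\<in>UNIV. ricci metric i i x / metric_diag i x)"
    unfolding scalar_curv_def matrix_inv_metric by (simp add: mult_if_zero)
  also have "\<dots> = - (real CARD('n) - 1) * dalpha (x $ i0) / P (x $ i0)
     + (\<Sum>i\<in>UNIV - {i0}. ((real CARD('n) - 2) * (1 - alpha (x $ i0)^2) - dalpha (x $ i0)) / P (x $ i0))"
    using sph_pos[of x] by (simp add: sum_UNIV_remove ricci_metric metric_diag_def)
  also have "\<dots> = (real CARD('n) - 1) * ((real CARD('n) - 2) * (1 - alpha (x $ i0)^2) - 2 * dalpha (x $ i0)) / P (x $ i0)"
    using card_sphere_coords P_pos[of "x $ i0"] by (simp add: field_simps)
  finally show ?thesis .
qed

lemma schouten_metric:
  assumes "CARD('n) > 2"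
  shows "schouten metric x = (\<chi> i j. if i = j then
      (if i = i0 then - dalpha (x $ i0) - (1 - alpha (x $ i0)^2) / 2
       else sph x * (1 - alpha (x $ i0)^2) / 2) else 0)"
proof -
  have half_scalar: "(c - 1) * ((c - 2) * (1 - a^2) - 2 * d) / p / (2 * (c - 1)) * (p * q)
      = ((c - 2) * (1 - a^2) - 2 * d) * q / 2"
    if "c - 1 \<noteq> 0" "p > 0" for c p a d q :: real
    using that by (simp add: field_simps)
  have tt: "(- (c - 1) * d - (c - 1) * ((c - 2) * (1 - a^2) - 2 * d) / p / (2 * (c - 1)) * p) / (c - 2)
      = - d - (1 - a^2) / 2"
    if "c - 1 \<noteq> 0" "c - 2 \<noteq> 0" "p > 0" for c p a d :: real
  proof -
    have "(c - 1) * ((c - 2) * (1 - a^2) - 2 * d) / p / (2 * (c - 1)) * p = ((c - 2) * (1 - a^2) - 2 * d) / 2"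
      using half_scalar[of c p a d 1] that by simp
    then have "(- (c - 1) * d - (c - 1) * ((c - 2) * (1 - a^2) - 2 * d) / p / (2 * (c - 1)) * p) / (c - 2)
        = (- (c - 1) * d - ((c - 2) * (1 - a^2) - 2 * d) / 2) / (c - 2)"
      by (simp only:)
    also have "\<dots> = - d - (1 - a^2) / 2" using that by (simp add: field_simps)
    finally show ?thesis .
  qed
  have yy: "(q * ((c - 2) * (1 - a^2) - d)
        - (c - 1) * ((c - 2) * (1 - a^2) - 2 * d) / p / (2 * (c - 1)) * (p * q)) / (c - 2)
      = q * (1 - a^2) / 2"
    if "c - 1 \<noteq> 0" "c - 2 \<noteq> 0" "p > 0" for c p a d q :: real
    unfolding half_scalar[OF that(1,3)] using that by (simp add: field_simps)
  have c: "real CARD('n) - 1 \<noteq> 0" "real CARD('n) - 2 \<noteq> 0" using assms by auto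
  show ?thesis
    unfolding vec_eq_iff
  proof (intro allI)
    fix i j
    show "schouten metric x $ i $ j = (\<chi> i j. if i = j then
      (if i = i0 then - dalpha (x $ i0) - (1 - alpha (x $ i0)^2) / 2
       else sph x * (1 - alpha (x $ i0)^2) / 2) else 0) $ i $ j"
      unfolding schouten_def vec_lambda_beta ricci_metric scalar_curv_metric
      using tt[OF c P_pos[of "x $ i0"], where a = "alpha (x $ i0)" and d = "dalpha (x $ i0)"]
        yy[OF c P_pos[of "x $ i0"], where a = "alpha (x $ i0)" and d = "dalpha (x $ i0)" and q = "sph x"]
      by (auto simp: metric_def metric_diag_def)
  qed
qed

lemma scaled_inv_metric_schouten:
  assumes "CARD('n) > 2"
  shows "K *\<^sub>R (matrix_inv (metric x) ** schouten metric x) = (\<chi> i j. if i = j then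
      (if i = i0 then K * (- dalpha (x $ i0) - (1 - alpha (x $ i0)^2) / 2) / P (x $ i0)
       else K * (1 - alpha (x $ i0)^2) / (2 * P (x $ i0))) else 0)"
  unfolding matrix_inv_metric schouten_metric[OF assms] vec_eq_iff matrix_matrix_mult_def
  using sph_pos[of x] P_pos[of "x $ i0"] by (auto simp: mult_if_zero metric_diag_def)

end

section \<open>Elementary symmetric functions\<close>

definition elem_sym :: "nat \<Rightarrow> ('n::finite \<Rightarrow> real) \<Rightarrow> real" where
  "elem_sym k a = (\<Sum>S\<in>{S::'n set. card S = k}. \<Prod>i\<in>S. a i)"

lemma sigma_k_eq_elem_sym_eigs: "sigma_k k B = elem_sym k (eigs B)"
  by (simp add: sigma_k_def elem_sym_def)

lemma prod_one_plus_eq_elem_sym: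
  "(\<Prod>i\<in>(UNIV::'n::finite set). 1 + z * a i) = (\<Sum>k\<le>CARD('n). elem_sym k a * z^k)"
proof -
  have "(\<Prod>i\<in>(UNIV::'n set). z * a i + 1) = (\<Sum>X\<in>Pow UNIV. (\<Prod>i\<in>X. z * a i) * (\<Prod>i\<in>UNIV - X. 1))"
    by (rule prod_add) simp
  also have "\<dots> = (\<Sum>X\<in>Pow UNIV. z ^ card X * (\<Prod>i\<in>X. a i))"
    by (simp add: prod.distrib)
  also have "\<dots> = (\<Sum>k\<in>{..CARD('n)}. \<Sum>X\<in>{X. X \<in> Pow UNIV \<and> card X = k}. z ^ card X * (\<Prod>i\<in>X. a i))"
    by (rule sum.group[symmetric]) (auto simp: card_mono)
  also have "\<dots> = (\<Sum>k\<le>CARD('n). elem_sym k a * z^k)"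
  proof (rule sum.cong)
    fix k
    have "(\<Sum>X\<in>{X. X \<in> Pow UNIV \<and> card X = k}. z ^ card X * (\<Prod>i\<in>X. a i))
       = (\<Sum>X\<in>{S::'n set. card S = k}. z ^ k * (\<Prod>i\<in>X. a i))"
      by (rule sum.cong) auto
    then show "(\<Sum>X\<in>{X. X \<in> Pow UNIV \<and> card X = k}. z ^ card X * (\<Prod>i\<in>X. a i)) = elem_sym k a * z^k"
      by (simp add: elem_sym_def sum_distrib_left mult.commute)
  qed simp
  finally show ?thesis by (simp add: add.commute)
qed

lemma elem_sym_eq_if_same_roots:
  fixes a b :: "'n::finite \<Rightarrow> real"
  assumes "\<And>\<mu>. (\<Prod>i\<in>UNIV. \<mu> - a i) = (\<Prod>i\<in>UNIV. \<mu> - b i)" and "k \<le> CARD('n)"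
  shows "elem_sym k a = elem_sym k b"
proof -
  have "(\<Prod>i\<in>(UNIV::'n set). 1 + z * a i) = (\<Prod>i\<in>UNIV. 1 + z * b i)" for z
  proof (cases "z = 0")
    case False
    have reversed: "(\<Prod>i\<in>(UNIV::'n set). 1 + z * c i) = (- z) ^ CARD('n) * (\<Prod>i\<in>UNIV. (- 1 / z) - c i)"
      for c :: "'n \<Rightarrow> real"
    proof -
      have "(\<Prod>i\<in>(UNIV::'n set). 1 + z * c i) = (\<Prod>i\<in>UNIV. (- z) * ((- 1 / z) - c i))"
        using False by (intro prod.cong) (auto simp: field_simps)
      then show ?thesis unfolding prod.distrib by simp
    qed
    show ?thesis unfolding reversed assms(1) ..
  qed simp
  then have "\<forall>z. (\<Sum>k\<le>CARD('n). elem_sym k a * z^k) = (\<Sum>k\<le>CARD('n). elem_sym k b * z^k)"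
    by (simp add: prod_one_plus_eq_elem_sym)
  then show ?thesis
    using polyfun_eq_coeffs[where c="\<lambda>k. elem_sym k a" and d="\<lambda>k. elem_sym k b"] assms(2) by blast
qed

lemma sigma_k_diagonal:
  fixes d :: "'n::finite \<Rightarrow> real"
  assumes "k \<le> CARD('n)"
  shows "sigma_k k (\<chi> i j. if i = j then d i else 0) = elem_sym k d"
proof -
  let ?B = "(\<chi> i j. if i = j then d i else 0) :: real^'n^'n"
  have char_poly: "det (\<mu> *\<^sub>R mat 1 - ?B) = (\<Prod>i\<in>UNIV. \<mu> - d i)" for \<mu>
  proof -
    have "det (\<mu> *\<^sub>R mat 1 - ?B) = (\<Prod>i\<in>UNIV. (\<mu> *\<^sub>R mat 1 - ?B) $ i $ i)"
      by (rule det_diagonal) (simp add: mat_def)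
    then show ?thesis by (simp add: mat_def)
  qed
  have "\<exists>lam::'n \<Rightarrow> real. \<forall>\<mu>. det (\<mu> *\<^sub>R mat 1 - ?B) = (\<Prod>i\<in>UNIV. \<mu> - lam i)"
    by (rule exI[of _ d]) (simp add: char_poly)
  then have "\<forall>\<mu>. det (\<mu> *\<^sub>R mat 1 - ?B) = (\<Prod>i\<in>UNIV. \<mu> - eigs ?B i)"
    unfolding eigs_def by (rule someI_ex)
  then have "elem_sym k (eigs ?B) = elem_sym k d"
    by (intro elem_sym_eq_if_same_roots assms) (simp add: char_poly)
  then show ?thesis by (simp add: sigma_k_eq_elem_sym_eigs)
qed

lemma elem_sym_two_valued:
  fixes i0 :: "'n::finite"
  assumes "k \<ge> 1"
  shows "elem_sym k (\<lambda>i. if i = i0 then L1 else L2)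
     = real ((CARD('n) - 1) choose k) * L2^k + real ((CARD('n) - 1) choose (k - 1)) * L1 * L2^(k - 1)"
proof -
  let ?d = "\<lambda>i. if i = i0 then L1 else L2"
  let ?Y = "UNIV - {i0}"
  define A1 where "A1 = {S::'n set. card S = k \<and> i0 \<notin> S}"
  define A2 where "A2 = {S::'n set. card S = k \<and> i0 \<in> S}"
  have prod_A1: "(\<Prod>i\<in>S. ?d i) = L2^k" if "S \<in> A1" for S
  proof -
    have "(\<Prod>i\<in>S. ?d i) = (\<Prod>i\<in>S. L2)" using that by (intro prod.cong) (auto simp: A1_def)
    then show ?thesis using that by (simp add: A1_def)
  qed
  have prod_A2: "(\<Prod>i\<in>S. ?d i) = L1 * L2^(k - 1)" if "S \<in> A2" for S
  proof -
    have i0S: "i0 \<in> S" and cS: "card S = k" using that by (auto simp: A2_def)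
    have "(\<Prod>i\<in>S. ?d i) = ?d i0 * (\<Prod>i\<in>S - {i0}. ?d i)" by (rule prod.remove[OF finite i0S])
    also have "(\<Prod>i\<in>S - {i0}. ?d i) = (\<Prod>i\<in>S - {i0}. L2)" by (intro prod.cong) auto
    also have "\<dots> = L2^(k - 1)" using cS i0S by (simp add: card_Diff_singleton)
    finally show ?thesis by simp
  qed
  have card_A1: "card A1 = (CARD('n) - 1) choose k"
  proof -
    have "A1 = {B. B \<subseteq> ?Y \<and> card B = k}" by (auto simp: A1_def)
    then show ?thesis by (simp add: n_subsets card_Diff_singleton)
  qed
  have card_A2: "card A2 = (CARD('n) - 1) choose (k - 1)"
  proof -
    have "bij_betw (insert i0) {B. B \<subseteq> ?Y \<and> card B = k - 1} A2"
    proof (rule bij_betwI[where g = "\<lambda>S. S - {i0}"])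
      show "insert i0 \<in> {B. B \<subseteq> ?Y \<and> card B = k - 1} \<rightarrow> A2"
        using assms by (auto simp: A2_def card_insert_if finite_subset)
      show "(\<lambda>S. S - {i0}) \<in> A2 \<rightarrow> {B. B \<subseteq> ?Y \<and> card B = k - 1}"
        by (auto simp: A2_def card_Diff_singleton)
    qed (auto simp: A2_def)
    then have "card A2 = card {B. B \<subseteq> ?Y \<and> card B = k - 1}" by (simp add: bij_betw_same_card)
    then show ?thesis by (simp add: n_subsets card_Diff_singleton)
  qed
  have "{S::'n set. card S = k} = A1 \<union> A2" "A1 \<inter> A2 = {}" by (auto simp: A1_def A2_def)
  then have "elem_sym k ?d = (\<Sum>S\<in>A1. \<Prod>i\<in>S. ?d i) + (\<Sum>S\<in>A2. \<Prod>i\<in>S. ?d i)"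
    unfolding elem_sym_def by (simp add: sum.union_disjoint)
  also have "\<dots> = real (card A1) * L2^k + real (card A2) * (L1 * L2^(k - 1))"
    using sum.cong[OF refl prod_A1, of A1] sum.cong[OF refl prod_A2, of A2] by simp
  finally show ?thesis unfolding card_A1 card_A2 by (simp only: mult.assoc)
qed

section \<open>The ODE \<open>v'' = b\<^sup>2 v\<close>\<close>

lemma DERIV_linear_eq_exp:
  fixes p :: "real \<Rightarrow> real"
  assumes "\<And>t. (p has_real_derivative c * p t) (at t)"
  shows "p t = p 0 * exp (c * t)"
proof -
  have "((\<lambda>t. p t * exp (- c * t)) has_real_derivative 0) (at t)" for t
    by (rule DERIV_cong[OF DERIV_mult[OF assms DERIV_exp[THEN DERIV_chain2, OF DERIV_cmult[OF DERIV_ident]]]])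
      (simp add: algebra_simps)
  then have "p t * exp (- c * t) = p 0 * exp (- c * 0)"
    by (intro DERIV_isconst_all) blast
  then show ?thesis by (simp add: exp_minus field_simps)
qed

lemma nonvanishing_if_power_mult_deriv_zero:
  fixes h :: "real \<Rightarrow> real"
  assumes "\<And>t. (h has_real_derivative h' t) (at t)" and "\<And>t. h t ^ m * h' t = 0" and "h 0 \<noteq> 0"
  shows "h t \<noteq> 0"
proof -
  have "((\<lambda>t. h t ^ Suc m) has_real_derivative 0) (at t)" for t
    by (rule DERIV_cong[OF DERIV_power[OF assms(1)]]) (use assms(2)[of t] in \<open>simp add: mult.commute\<close>)
  then have "h t ^ Suc m = h 0 ^ Suc m"
    by (intro DERIV_isconst_all) blast
  then show ?thesis using assms(3) by auto
qed

lemma cosh_solution_of_ode: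
  fixes v :: "real \<Rightarrow> real"
  assumes dv: "\<And>t. (v has_real_derivative deriv v t) (at t)"
    and ddv: "\<And>t. (deriv v has_real_derivative b^2 * v t) (at t)"
    and b: "b \<noteq> 0" and v0: "v 0 > 0" and h0: "v 0 ^ 2 - (deriv v 0 / b)^2 > 0"
  shows "\<exists>c. \<forall>t. v t = sqrt (v 0 ^ 2 - (deriv v 0 / b)^2) * cosh (b * t - c)"
proof -
  define p where "p t = v t + deriv v t / b" for t
  define q where "q t = v t - deriv v t / b" for t
  have "(p has_real_derivative b * p t) (at t)" for t
    unfolding p_def[abs_def]
    by (rule DERIV_cong[OF DERIV_add[OF dv DERIV_cdivide[OF ddv]]]) (use b in \<open>simp add: field_simps power2_eq_square\<close>)
  then have p: "p t = p 0 * exp (b * t)" for t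
    by (rule DERIV_linear_eq_exp)
  have "(q has_real_derivative - b * q t) (at t)" for t
    unfolding q_def[abs_def]
    by (rule DERIV_cong[OF DERIV_diff[OF dv DERIV_cdivide[OF ddv]]]) (use b in \<open>simp add: field_simps power2_eq_square\<close>)
  then have q: "q t = q 0 * exp (- b * t)" for t
    by (rule DERIV_linear_eq_exp)
  have h0_pq: "v 0 ^ 2 - (deriv v 0 / b)^2 = p 0 * q 0"
    by (simp add: p_def q_def algebra_simps power2_eq_square)
  have "p 0 * q 0 > 0" using h0 h0_pq by simp
  moreover have "p 0 + q 0 > 0" using v0 by (simp add: p_def q_def)
  ultimately have pq_pos: "p 0 > 0" "q 0 > 0"
    by (auto simp: zero_less_mult_iff)
  define c where "c = ln (sqrt (q 0) / sqrt (p 0))"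
  have exp_c: "exp c = sqrt (q 0) / sqrt (p 0)"
    using pq_pos by (simp add: c_def)
  have rescale: "(P^2 * E + Q^2 * F) / 2 = P * Q * ((E / (Q / P) + Q / P * F) / 2)"
    if "P > 0" "Q > 0" for P Q E F :: real
    using that by (simp add: field_simps power2_eq_square)
  have "v t = sqrt (p 0 * q 0) * cosh (b * t - c)" for t
  proof -
    have "v t = (p 0 * exp (b * t) + q 0 * exp (- b * t)) / 2"
      using p[of t] q[of t] by (simp add: p_def q_def)
    also have "\<dots> = (sqrt (p 0)^2 * exp (b * t) + sqrt (q 0)^2 * exp (- b * t)) / 2"
      using pq_pos by simp
    also have "\<dots> = sqrt (p 0) * sqrt (q 0) * ((exp (b * t) / exp c + exp c * exp (- b * t)) / 2)"
      unfolding exp_c by (rule rescale) (use pq_pos in auto)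
    also have "\<dots> = sqrt (p 0 * q 0) * cosh (b * t - c)"
    proof -
      have "cosh (b * t - c) = (exp (b * t) / exp c + exp c * exp (- b * t)) / 2"
        by (simp add: cosh_def exp_diff exp_minus field_simps)
      then show ?thesis by (simp add: real_sqrt_mult)
    qed
    finally show ?thesis .
  qed
  then show ?thesis unfolding h0_pq by blast
qed

lemma cosh_solves_ode:
  fixes A b c :: real
  defines "v \<equiv> \<lambda>t. A * cosh (b * t - c)"
  shows "deriv (deriv v) t = b^2 * v t"
proof -
  have "deriv v = (\<lambda>t. A * (sinh (b * t - c) * b))"
    unfolding v_def
    by (intro ext DERIV_imp_deriv DERIV_cong[OF DERIV_cmult[OF has_field_derivative_cosh[OF
          DERIV_diff[OF DERIV_cmult[OF DERIV_ident] DERIV_const]]]]) simp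
  moreover have "((\<lambda>t. A * (sinh (b * t - c) * b)) has_real_derivative b^2 * v t) (at t)"
    unfolding v_def
    by (rule DERIV_cong[OF DERIV_cmult[OF DERIV_cmult_right[OF has_field_derivative_sinh[OF
          DERIV_diff[OF DERIV_cmult[OF DERIV_ident] DERIV_const]]]]]) (simp add: power2_eq_square)
  ultimately show ?thesis by (simp add: DERIV_imp_deriv)
qed

section \<open>\<open>\<sigma>\<^sub>k(B\<^sub>g\<^sub>v)\<close> for \<open>v = v(t)\<close>\<close>

lemma mult_binomial_pred_eq:
  assumes "1 \<le> k" "k \<le> n"
  shows "real k * real ((n - 1) choose k) = (real n - real k) * real ((n - 1) choose (k - 1))"
proof -
  obtain j where kj: "k = Suc j" using assms(1) by (cases k) auto
  have "k * ((n - 1) choose k) = (n - 1) * ((n - 1 - 1) choose j)"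
    using times_binomial_minus1_eq[of k "n - 1"] kj by simp
  also have "\<dots> = (n - k) * ((n - 1) choose (k - 1))"
    using binomial_absorb_comp[of "n - 1" j] kj by simp
  finally show ?thesis using assms(2) by (metis of_nat_diff of_nat_mult)
qed

context
  fixes v :: "real \<Rightarrow> real" and k :: nat and i0 :: "'n::finite"
  assumes k_ge_1: "1 \<le> k" and two_k_less: "2 * k < CARD('n)"
    and v_pos: "\<And>t. v t > 0" and v_smooth: "smooth_real v"
begin

definition rate :: real where
  "rate = (real CARD('n) - 2 * real k) / (2 * real k)"

definition inv_rate :: real where
  "inv_rate = 2 * real k / (real CARD('n) - 2 * real k)"

definition conf_factor :: "real \<Rightarrow> real" where
  "conf_factor t = v t powr (4 * real k / (real CARD('n) - 2 * real k))"

text \<open>The function \<open>h\<close> of the statement.\<close>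
definition energy :: "real \<Rightarrow> real" where
  "energy t = (v t)^2 - inv_rate^2 * (deriv v t)^2"

lemma n_minus_2k_pos: "real CARD('n) - 2 * real k > 0"
  using two_k_less by linarith

lemma rate_pos: "rate > 0"
  using n_minus_2k_pos k_ge_1 by (simp add: rate_def)

lemma inv_rate_mult_rate: "inv_rate * rate = 1"
  using n_minus_2k_pos k_ge_1 by (simp add: inv_rate_def rate_def)

lemma DERIV_v: "(v has_real_derivative deriv v t) (at t)"
  using v_smooth[unfolded smooth_real_def, rule_format, of 0 t]
  by (simp add: DERIV_deriv_iff_real_differentiable)

lemma DERIV_deriv_v: "(deriv v has_real_derivative deriv (deriv v) t) (at t)"
  using v_smooth[unfolded smooth_real_def, rule_format, of 1 t]
  by (simp add: DERIV_deriv_iff_real_differentiable)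

lemma DERIV_conf_factor:
  "(conf_factor has_real_derivative 2 * inv_rate * deriv v t * conf_factor t / v t) (at t)"
  unfolding conf_factor_def[abs_def]
  by (rule DERIV_cong[OF DERIV_powr[OF DERIV_v v_pos DERIV_const]])
    (use v_pos[of t] in \<open>simp add: inv_rate_def field_simps\<close>)

lemma conformal_cylinder_conf_factor: "conformal_cylinder conf_factor"
proof
  show "conf_factor t > 0" for t
    using v_pos[of t] by (simp add: conf_factor_def)
  show "conf_factor differentiable (at t)" for t
    using DERIV_conf_factor real_differentiable_def by blast
  have "deriv conf_factor = (\<lambda>t. 2 * inv_rate * deriv v t * conf_factor t / v t)"
    using DERIV_conf_factor by (intro ext DERIV_imp_deriv)
  moreover have "v differentiable (at t)" "deriv v differentiable (at t)" "conf_factor differentiable (at t)" for t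
    using DERIV_v DERIV_deriv_v DERIV_conf_factor by (auto simp: real_differentiable_def)
  ultimately show "deriv conf_factor differentiable (at t)" for t
    using v_pos[of t] by (auto intro!: derivative_intros)
qed

interpretation g: conformal_cylinder i0 conf_factor
  by (rule conformal_cylinder_conf_factor)

lemma alpha_conf_factor: "g.alpha t = inv_rate * deriv v t / v t"
  using DERIV_imp_deriv[OF DERIV_conf_factor] g.P_pos[of t] v_pos[of t]
  by (simp add: g.alpha_def field_simps)

lemma dalpha_conf_factor:
  "g.dalpha t = inv_rate * (deriv (deriv v) t * v t - deriv v t * deriv v t) / (v t * v t)"
proof -
  have "((\<lambda>t. inv_rate * deriv v t / v t) has_real_derivative
      (inv_rate * deriv (deriv v) t * v t - inv_rate * deriv v t * deriv v t) / (v t * v t)) (at t)"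
    using v_pos[of t] by (intro DERIV_divide DERIV_cmult DERIV_deriv_v DERIV_v) (auto simp: less_imp_neq[symmetric])
  then show ?thesis
    unfolding g.dalpha_def alpha_conf_factor[abs_def] by (simp add: DERIV_imp_deriv algebra_simps)
qed

lemma conf_metric_eq: "conf_metric k i0 v = g.metric"
  by (rule ext)
    (simp add: conf_metric_def cyl_metric_def g.metric_def g.metric_diag_def g.sph_def g.rad2_def
      vec_eq_iff conf_factor_def)

lemma B_endo_diagonal:
  "B_endo k i0 v x = (\<chi> i j. if i = j then (if i = i0
      then rate * (- inv_rate * (deriv (deriv v) (x $ i0) * v (x $ i0) - (deriv v (x $ i0))^2)
        - energy (x $ i0) / 2)
      else rate * energy (x $ i0) / 2) else 0)" (is "_ = ?rhs")
proof -
  define t where "t = x $ i0"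
  define K where "K = rate * v t powr (2 * real CARD('n) / (real CARD('n) - 2 * real k))"
  have "2 * real CARD('n) / (real CARD('n) - 2 * real k) - 4 * real k / (real CARD('n) - 2 * real k)
      = 2 * (real CARD('n) - 2 * real k) / (real CARD('n) - 2 * real k)"
    by (simp add: diff_divide_distrib[symmetric] algebra_simps)
  also have "\<dots> = 2"
    by (rule nonzero_mult_div_cancel_right) (use n_minus_2k_pos in simp)
  finally have "2 * real CARD('n) / (real CARD('n) - 2 * real k) - 4 * real k / (real CARD('n) - 2 * real k) = 2" .
  then have "v t powr (2 * real CARD('n) / (real CARD('n) - 2 * real k)) / conf_factor t = (v t)^2"
    using v_pos[of t] by (simp add: conf_factor_def flip: powr_diff)
  then have K_eq: "K = rate * (v t)^2 * conf_factor t"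
    using g.P_pos[of t] unfolding K_def by (simp add: field_simps)
  have "CARD('n) > 2" using two_k_less k_ge_1 by linarith
  have "B_endo k i0 v x = K *\<^sub>R (matrix_inv (g.metric x) ** schouten g.metric x)"
    unfolding B_endo_def conf_metric_eq K_def t_def rate_def ..
  also have "\<dots> = (\<chi> i j. if i = j then (if i = i0
      then K * (- g.dalpha t - (1 - g.alpha t^2) / 2) / conf_factor t
      else K * (1 - g.alpha t^2) / (2 * conf_factor t)) else 0)"
    unfolding t_def by (rule g.scaled_inv_metric_schouten) fact
  also have "\<dots> = ?rhs"
  proof -
    have "K * (- g.dalpha t - (1 - g.alpha t^2) / 2) / conf_factor t
        = rate * (- inv_rate * (deriv (deriv v) t * v t - (deriv v t)^2) - energy t / 2)"
      "K * (1 - g.alpha t^2) / (2 * conf_factor t) = rate * energy t / 2"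
      unfolding K_eq alpha_conf_factor dalpha_conf_factor energy_def
      using v_pos[of t] g.P_pos[of t] by (simp_all add: field_simps power2_eq_square)
    then show ?thesis unfolding t_def[symmetric] by (simp only:)
  qed
  finally show ?thesis .
qed

lemma sigma_k_B_endo:
  "sigma_k k (B_endo k i0 v x) = real ((CARD('n) - 1) choose (k - 1)) * (rate * energy (x $ i0) / 2)^(k - 1)
     * (rate * rate * v (x $ i0) * (v (x $ i0) - inv_rate^2 * deriv (deriv v) (x $ i0)))"
proof -
  define V where "V = v (x $ i0)"
  define D where "D = deriv v (x $ i0)"
  define D2 where "D2 = deriv (deriv v) (x $ i0)"
  define L1 where "L1 = rate * (- inv_rate * (D2 * V - D^2) - energy (x $ i0) / 2)"
  define L2 where "L2 = rate * energy (x $ i0) / 2"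
  define c1 where "c1 = real ((CARD('n) - 1) choose (k - 1))"
  define c2 where "c2 = real ((CARD('n) - 1) choose k)"
  have "B_endo k i0 v x = (\<chi> i j. if i = j then (if i = i0 then L1 else L2) else 0)"
    unfolding B_endo_diagonal L1_def L2_def V_def D_def D2_def ..
  then have "sigma_k k (B_endo k i0 v x) = c2 * L2^k + c1 * L1 * L2^(k - 1)"
    using two_k_less by (simp add: sigma_k_diagonal elem_sym_two_valued[OF k_ge_1] c1_def c2_def)
  also have "\<dots> = L2^(k - 1) * (c2 * L2 + c1 * L1)"
    using k_ge_1 by (cases k) (simp_all add: algebra_simps)
  also have "c2 * L2 + c1 * L1 = c1 * (rate * rate * V * (V - inv_rate^2 * D2))"
  proof -
    have "real k * c2 = (real CARD('n) - real k) * c1"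
      unfolding c1_def c2_def using mult_binomial_pred_eq k_ge_1 two_k_less by simp
    then have "c2 = (2 * rate + 1) * c1"
      using k_ge_1 n_minus_2k_pos by (simp add: rate_def field_simps)
    moreover have "c1 * rate * inv_rate * (inv_rate * rate - 1) * (D2 * V - D * D) = 0"
      using inv_rate_mult_rate by simp
    ultimately show ?thesis
      by (simp add: L1_def L2_def energy_def V_def D_def field_simps power2_eq_square)
  qed
  finally show ?thesis
    by (simp add: L2_def c1_def V_def D2_def)
qed

lemma sigma_k_B_endo_eq_0_iff:
  "sigma_k k (B_endo k i0 v x) = 0 \<longleftrightarrow>
     energy (x $ i0)^(k - 1) * (v (x $ i0) - inv_rate^2 * deriv (deriv v) (x $ i0)) = 0"
proof -
  have "k - 1 \<le> CARD('n) - 1" using two_k_less by linarith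
  then show ?thesis
    using rate_pos v_pos[of "x $ i0"] by (simp add: sigma_k_B_endo power_mult_distrib not_less)
qed

lemma DERIV_energy:
  "(energy has_real_derivative 2 * deriv v t * (v t - inv_rate^2 * deriv (deriv v) t)) (at t)"
  unfolding energy_def[abs_def]
  by (rule DERIV_cong[OF DERIV_diff[OF DERIV_power[OF DERIV_v] DERIV_cmult[OF DERIV_power[OF DERIV_deriv_v]]]])
    (simp add: algebra_simps)

lemma cosh_if_sigma_k_B_endo_eq_0:
  assumes sigma: "\<forall>x::real^'n. sigma_k k (B_endo k i0 v x) = 0" and energy_0: "energy 0 > 0"
  shows "\<exists>c. \<forall>t. v t = sqrt (energy 0) * cosh (rate * t - c)"
proof -
  have eq: "energy t^(k - 1) * (v t - inv_rate^2 * deriv (deriv v) t) = 0" for t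
    using sigma[rule_format, of "\<chi> i. t"] sigma_k_B_endo_eq_0_iff[of "\<chi> i. t"] by simp
  have "energy t \<noteq> 0" for t
    by (rule nonvanishing_if_power_mult_deriv_zero[OF DERIV_energy]) (use eq energy_0 in auto)
  then have "v t - inv_rate^2 * deriv (deriv v) t = 0" for t
    using eq[of t] by simp
  then have "deriv (deriv v) t = rate^2 * v t" for t
    using inv_rate_mult_rate by (simp add: power_mult_distrib[symmetric] algebra_simps)
  then have "(deriv v has_real_derivative rate^2 * v t) (at t)" for t
    using DERIV_deriv_v by metis
  moreover have "v 0 ^ 2 - (deriv v 0 / rate)^2 = energy 0"
    using inv_rate_mult_rate rate_pos by (simp add: energy_def field_simps flip: power_mult_distrib)
  ultimately show ?thesis
    using cosh_solution_of_ode[OF DERIV_v, of rate] rate_pos v_pos[of 0] energy_0 by simp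
qed

lemma sigma_k_B_endo_eq_0_if_cosh:
  assumes "\<forall>t. v t = A * cosh (rate * t - c)"
  shows "sigma_k k (B_endo k i0 v x) = 0"
proof -
  have "v = (\<lambda>t. A * cosh (rate * t - c))" using assms by auto
  then have "deriv (deriv v) t = rate^2 * v t" for t
    using cosh_solves_ode by simp
  then show ?thesis
    using inv_rate_mult_rate by (simp add: sigma_k_B_endo_eq_0_iff power_mult_distrib[symmetric] algebra_simps)
qed

lemma energy_0_eq: "energy 0 = (v 0)^2 - (2 * real k / (real CARD('n) - 2 * real k))^2 * (deriv v 0)^2"
  by (simp add: energy_def inv_rate_def)

lemma sigma_k_B_endo_eq_0_iff_cosh:
  assumes "energy 0 > 0"
  shows "(\<forall>x::real^'n. sigma_k k (B_endo k i0 v x) = 0) \<longleftrightarrow>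
    (\<exists>c. \<forall>t. v t = sqrt (energy 0) * cosh ((real CARD('n) - 2 * real k) / (2 * real k) * t - c))"
  using cosh_if_sigma_k_B_endo_eq_0[OF _ assms] sigma_k_B_endo_eq_0_if_cosh unfolding rate_def by blast

end

theorem proposition2p1:
  fixes v :: "real \<Rightarrow> real" and k :: nat and i0 :: "'n::finite"
  assumes "2 \<le> 2 * k" and "2 * k < CARD('n)"
    and "smooth_real v" and "\<forall>t. v t > 0"
    and "h0 = (v 0)^2 - (2 * real k / (real CARD('n) - 2 * real k))^2 * (deriv v 0)^2"
    and "h0 > 0"
  shows "(\<forall>x::real^'n. sigma_k k (B_endo k i0 v x) = 0) \<longleftrightarrow>
         (\<exists>c::real. \<forall>t. v t = sqrt h0 * cosh ((real CARD('n) - 2 * real k) / (2 * real k) * t - c))"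
proof -
  have "1 \<le> k" using assms(1) by simp
  note context_assms = this assms(2) assms(4)[rule_format] assms(3)
  show ?thesis
    using sigma_k_B_endo_eq_0_iff_cosh[OF context_assms, of i0] energy_0_eq[OF context_assms] assms(5,6)
    by simp
qed

end
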